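(* Let $\Gamma=\langle x,y,z\mid xy^{-1}=yx^{-1},\ xz^{-1}=zx^{-1},\ yz^{-1}=zy^{-1}\rangle$ with generating set $\Delta=\{x,y,z\}$. There is no homogeneous scalar quantum walk on $C_\Delta(\Gamma)$.
   Context: The Cayley graph $C_\Delta(\Gamma)$ has vertex set $\Gamma$ and directed edges $(g,g\delta)$, $g\in\Gamma,\delta\in\Delta$. Let $\ell^2(\Gamma)$ have orthonormal basis $\{|g\rangle\}_{g\in\Gamma}$ and for $\delta\in\Gamma$ let $U_\delta|g\rangle=|g\delta\rangle$. A homogeneous scalar quantum walk on $C_\Delta(\Gamma)$ is a unitary operator $W=\sum_{\delta\in\Delta}W_\delta U_\delta$ with all complex coefficients $W_\delta$ nonzero. *)

theory Defs
  imports "HOL-Analysis.Analysis" "HOL-Algebra.Algebra"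
begin

definition gamma_rels :: "('a, 'b) monoid_scheme \<Rightarrow> 'a \<Rightarrow> 'a \<Rightarrow> 'a \<Rightarrow> bool" where
  "gamma_rels H a b c \<longleftrightarrow>
     a \<otimes>\<^bsub>H\<^esub> inv\<^bsub>H\<^esub> b = b \<otimes>\<^bsub>H\<^esub> inv\<^bsub>H\<^esub> a \<and>
     a \<otimes>\<^bsub>H\<^esub> inv\<^bsub>H\<^esub> c = c \<otimes>\<^bsub>H\<^esub> inv\<^bsub>H\<^esub> a \<and>
     b \<otimes>\<^bsub>H\<^esub> inv\<^bsub>H\<^esub> c = c \<otimes>\<^bsub>H\<^esub> inv\<^bsub>H\<^esub> b"

text \<open>G (with distinguished elements x, y, z) is the group presented by generators x, y, z and
  the relations above: it is generated by x, y, z, the relations hold, and it has the universal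
  property of the presentation with respect to every group whose elements live in the same
  (infinite) type.\<close>
definition is_gamma_presentation :: "'a monoid \<Rightarrow> 'a \<Rightarrow> 'a \<Rightarrow> 'a \<Rightarrow> bool" where
  "is_gamma_presentation G x y z \<longleftrightarrow>
     group G \<and> x \<in> carrier G \<and> y \<in> carrier G \<and> z \<in> carrier G \<and>
     carrier G = generate G {x, y, z} \<and>
     gamma_rels G x y z \<and>
     (\<forall>(H :: 'a monoid) a b c. group H \<longrightarrow> a \<in> carrier H \<longrightarrow> b \<in> carrier H \<longrightarrow> c \<in> carrier H
        \<longrightarrow> gamma_rels H a b c
        \<longrightarrow> (\<exists>h \<in> hom G H. h x = a \<and> h y = b \<and> h z = c))"

definition l2 :: "('a, 'b) monoid_scheme \<Rightarrow> ('a \<Rightarrow> complex) set" where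
  "l2 G = {\<psi>. (\<forall>g. g \<notin> carrier G \<longrightarrow> \<psi> g = 0) \<and>
                (\<lambda>g. (cmod (\<psi> g))\<^sup>2) summable_on carrier G}"

definition l2_norm :: "('a, 'b) monoid_scheme \<Rightarrow> ('a \<Rightarrow> complex) \<Rightarrow> real" where
  "l2_norm G \<psi> = sqrt (infsum (\<lambda>g. (cmod (\<psi> g))\<^sup>2) (carrier G))"

text \<open>The operator W = sum over d in D of W_d U_d, where U_d |g> = |g d>,
  i.e. (W psi)(h) = sum over d in D of W_d psi(h d^-1).\<close>
definition walk_op :: "('a, 'b) monoid_scheme \<Rightarrow> 'a set \<Rightarrow> ('a \<Rightarrow> complex)
                       \<Rightarrow> ('a \<Rightarrow> complex) \<Rightarrow> ('a \<Rightarrow> complex)" where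
  "walk_op G D Wc \<psi> = (\<lambda>h. if h \<in> carrier G
       then (\<Sum>d\<in>D. Wc d * \<psi> (h \<otimes>\<^bsub>G\<^esub> inv\<^bsub>G\<^esub> d)) else 0)"

definition unitary_on_l2 :: "('a, 'b) monoid_scheme \<Rightarrow> (('a \<Rightarrow> complex) \<Rightarrow> ('a \<Rightarrow> complex)) \<Rightarrow> bool" where
  "unitary_on_l2 G W \<longleftrightarrow>
     W ` l2 G = l2 G \<and> (\<forall>\<psi>\<in>l2 G. l2_norm G (W \<psi>) = l2_norm G \<psi>)"

definition homogeneous_scalar_qw :: "('a, 'b) monoid_scheme \<Rightarrow> 'a set \<Rightarrow> ('a \<Rightarrow> complex) \<Rightarrow> bool" where
  "homogeneous_scalar_qw G D Wc \<longleftrightarrow>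
     (\<forall>d\<in>D. Wc d \<noteq> 0) \<and> unitary_on_l2 G (walk_op G D Wc)"

end

theory Submission
  imports Defs
begin

(*
  Put g = x y^-1. The relation x y^-1 = y x^-1 says g x = y and g y = x, while g z is none of
  x, y, z. Applying the isometry W to the unit vector delta_1 and to delta_1 + delta_g gives
  |W_x|^2 + |W_y|^2 + |W_z|^2 = 1 and 2 |W_x + W_y|^2 + 2 |W_z|^2 = 2, so W_x and W_y are
  orthogonal in C = R^2. By symmetry W_x, W_y, W_z would be three nonzero pairwise orthogonal
  vectors of the plane. That x, y, z are distinct follows by mapping them to (0,0), (1,0), (0,1)
  in the Klein four-group, which satisfies the relations because it has exponent two.
*)

lemma l2_finite_support:
  assumes "finite S" "S \<subseteq> carrier G" "\<And>h. h \<notin> S \<Longrightarrow> \<psi> h = 0"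
  shows "\<psi> \<in> l2 G" and "l2_norm G \<psi> = sqrt (\<Sum>h\<in>S. (cmod (\<psi> h))\<^sup>2)"
proof -
  have "(\<lambda>g. (cmod (\<psi> g))\<^sup>2) summable_on carrier G \<longleftrightarrow> (\<lambda>g. (cmod (\<psi> g))\<^sup>2) summable_on S"
    by (rule summable_on_cong_neutral) (use assms in auto)
  then show "\<psi> \<in> l2 G"
    using assms unfolding l2_def by auto
  have "infsum (\<lambda>g. (cmod (\<psi> g))\<^sup>2) (carrier G) = infsum (\<lambda>g. (cmod (\<psi> g))\<^sup>2) S"
    by (rule infsum_cong_neutral) (use assms in auto)
  then show "l2_norm G \<psi> = sqrt (\<Sum>h\<in>S. (cmod (\<psi> h))\<^sup>2)"
    unfolding l2_norm_def using assms by simp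
qed

lemma unitary_on_l2_finite_support:
  assumes "unitary_on_l2 G W"
    and "finite S" "S \<subseteq> carrier G" "\<And>h. h \<notin> S \<Longrightarrow> \<psi> h = 0"
    and "finite T" "T \<subseteq> carrier G" "\<And>h. h \<notin> T \<Longrightarrow> W \<psi> h = 0"
  shows "(\<Sum>h\<in>T. (cmod (W \<psi> h))\<^sup>2) = (\<Sum>h\<in>S. (cmod (\<psi> h))\<^sup>2)"
proof -
  have "\<psi> \<in> l2 G"
    by (rule l2_finite_support(1)) (use assms in auto)
  with assms(1) have "l2_norm G (W \<psi>) = l2_norm G \<psi>"
    unfolding unitary_on_l2_def by blast
  moreover have "l2_norm G \<psi> = sqrt (\<Sum>h\<in>S. (cmod (\<psi> h))\<^sup>2)"
    by (rule l2_finite_support(2)) (use assms in auto)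
  moreover have "l2_norm G (W \<psi>) = sqrt (\<Sum>h\<in>T. (cmod (W \<psi> h))\<^sup>2)"
    by (rule l2_finite_support(2)) (use assms in auto)
  ultimately show ?thesis
    by simp
qed

context group
begin

lemma walk_op_three:
  assumes "a \<noteq> b" "a \<noteq> c" "b \<noteq> c" and "h \<in> carrier G"
  shows "walk_op G {a, b, c} W \<psi> h =
           W a * \<psi> (h \<otimes> inv a) + W b * \<psi> (h \<otimes> inv b) + W c * \<psi> (h \<otimes> inv c)"
  using assms by (simp add: walk_op_def algebra_simps)

lemma indicator_pair_mult_inv:
  assumes "g \<in> carrier G" "h \<in> carrier G" "d \<in> carrier G"
  shows "indicator {\<one>, g} (h \<otimes> inv d) = (if h = d \<or> h = g \<otimes> d then 1 else 0)"
  using assms by (auto simp: indicator_def inv_solve_right')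

lemma walk_op_three_indicator:
  assumes "a \<in> carrier G" "b \<in> carrier G" "c \<in> carrier G" "a \<noteq> b" "a \<noteq> c" "b \<noteq> c"
    and "g \<in> carrier G" "h \<in> carrier G"
  shows "walk_op G {a, b, c} W (indicator {\<one>, g}) h =
           (if h = a \<or> h = g \<otimes> a then W a else 0) + (if h = b \<or> h = g \<otimes> b then W b else 0)
         + (if h = c \<or> h = g \<otimes> c then W c else 0)"
  using assms by (simp add: walk_op_three indicator_pair_mult_inv)

lemma unitary_walk_three_norm:
  assumes "a \<in> carrier G" "b \<in> carrier G" "c \<in> carrier G" "a \<noteq> b" "a \<noteq> c" "b \<noteq> c"
    and "unitary_on_l2 G (walk_op G {a, b, c} W)"
  shows "(cmod (W a))\<^sup>2 + (cmod (W b))\<^sup>2 + (cmod (W c))\<^sup>2 = 1"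
proof -
  have image: "walk_op G {a, b, c} W (indicator {\<one>}) h =
      (if h = a then W a else if h = b then W b else if h = c then W c else 0)" for h
    using walk_op_three_indicator[OF assms(1-6) one_closed, of h] assms(1-6)
    by (cases "h \<in> carrier G") (auto simp: walk_op_def)
  have "(\<Sum>h\<in>{a, b, c}. (cmod (walk_op G {a, b, c} W (indicator {\<one>}) h))\<^sup>2)
        = (\<Sum>h\<in>{\<one>}. (cmod (indicator {\<one>} h :: complex))\<^sup>2)"
    by (rule unitary_on_l2_finite_support[OF assms(7)]) (use assms in \<open>auto simp: image\<close>)
  then show ?thesis
    using assms by (simp add: image)
qed

lemma unitary_walk_three_involution_norm:
  assumes "a \<in> carrier G" "b \<in> carrier G" "c \<in> carrier G" "a \<noteq> b" "a \<noteq> c" "b \<noteq> c"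
    and "a \<otimes> inv b = b \<otimes> inv a"
    and "unitary_on_l2 G (walk_op G {a, b, c} W)"
  shows "(cmod (W a + W b))\<^sup>2 + (cmod (W c))\<^sup>2 = 1"
proof -
  define g where "g = a \<otimes> inv b"
  have g: "g \<in> carrier G"
    using assms(1,2) by (simp add: g_def)
  have ga: "g \<otimes> a = b"
    using assms(1,2) by (simp add: g_def assms(7) m_assoc)
  have gb: "g \<otimes> b = a"
    using assms(1,2) by (simp add: g_def m_assoc)
  have "g \<noteq> \<one>"
    using assms(1,2,4) by (simp add: g_def inv_solve_right')
  then have "g \<otimes> b \<noteq> g \<otimes> c" "g \<otimes> a \<noteq> g \<otimes> c" "c \<noteq> g \<otimes> c"
    using g assms(1-3,5,6) by simp_all
  then have gc: "a \<noteq> g \<otimes> c" "b \<noteq> g \<otimes> c" "c \<noteq> g \<otimes> c"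
    unfolding ga gb .
  have image: "walk_op G {a, b, c} W (indicator {\<one>, g}) h =
      (if h = a \<or> h = b then W a + W b else if h = c \<or> h = g \<otimes> c then W c else 0)" for h
  proof (cases "h \<in> carrier G")
    case True
    then show ?thesis
      using walk_op_three_indicator[OF assms(1-6) g True] ga gb gc by auto
  next
    case False
    then show ?thesis
      using assms(1-3) g by (auto simp: walk_op_def)
  qed
  have "(\<Sum>h\<in>{a, b, c, g \<otimes> c}. (cmod (walk_op G {a, b, c} W (indicator {\<one>, g}) h))\<^sup>2)
        = (\<Sum>h\<in>{\<one>, g}. (cmod (indicator {\<one>, g} h :: complex))\<^sup>2)"
    by (rule unitary_on_l2_finite_support[OF assms(8)]) (use assms g in \<open>auto simp: image\<close>)
  then show ?thesis
    using assms(4-6) gc \<open>g \<noteq> \<one>\<close> by (simp add: image)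
qed

lemma unitary_walk_orthogonal_coeffs:
  assumes "D = {a, b, c}"
    and "a \<in> carrier G" "b \<in> carrier G" "c \<in> carrier G" "a \<noteq> b" "a \<noteq> c" "b \<noteq> c"
    and "a \<otimes> inv b = b \<otimes> inv a"
    and "unitary_on_l2 G (walk_op G D W)"
  shows "orthogonal (W a) (W b)"
  using unitary_walk_three_norm[OF assms(2-7), of W]
    unitary_walk_three_involution_norm[OF assms(2-8), of W] assms(1,9)
  by (simp add: orthogonal_def dot_norm)

end

lemma no_three_pairwise_orthogonal_nonzero:
  fixes u v w :: "'a::euclidean_space"
  assumes "DIM('a) \<le> 2" and "u \<noteq> 0" "v \<noteq> 0" "w \<noteq> 0"
    and "orthogonal u v" "orthogonal u w" "orthogonal v w"
  shows False
proof -
  have "u \<noteq> v" "u \<noteq> w" "v \<noteq> w"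
    using assms(2-7) orthogonal_self by metis+
  moreover have "independent {u, v, w}"
    by (rule pairwise_orthogonal_independent)
      (use assms(2-7) in \<open>auto simp: pairwise_def orthogonal_commute\<close>)
  then have "card {u, v, w} \<le> DIM('a)"
    using independent_bound by blast
  ultimately show False
    using assms(1) by simp
qed

lemma (in group) gamma_rels_of_exponent_two:
  assumes "\<And>u. u \<in> carrier G \<Longrightarrow> u \<otimes> u = \<one>"
    and "a \<in> carrier G" "b \<in> carrier G" "c \<in> carrier G"
  shows "gamma_rels G a b c"
proof -
  have self_inverse: "inv u = u" if "u \<in> carrier G" for u
    using inv_equality[OF assms(1)[OF that] that that] .
  have "u \<otimes> inv v = v \<otimes> inv u" if "u \<in> carrier G" "v \<in> carrier G" for u v
  proof -
    have "u \<otimes> inv v = inv (u \<otimes> inv v)"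
      using that by (simp add: self_inverse)
    also have "\<dots> = v \<otimes> inv u"
      using that by (simp add: inv_mult_group)
    finally show ?thesis .
  qed
  then show ?thesis
    using assms(2-4) by (simp add: gamma_rels_def)
qed

lemma gamma_rels_hom:
  assumes "group K" "group H" "h \<in> hom K H"
    and "a \<in> carrier K" "b \<in> carrier K" "c \<in> carrier K"
    and "gamma_rels K a b c"
  shows "gamma_rels H (h a) (h b) (h c)"
proof -
  interpret group_hom K H h
    using assms(1-3) by (simp add: group_hom_def group_hom_axioms_def)
  show ?thesis
    using assms(4-7) by (simp add: gamma_rels_def flip: hom_mult hom_inv)
qed

lemma (in group) inj_on_image_group:
  assumes "inj_on f (carrier G)"
  shows "group (image_group f G)" and "f \<in> hom G (image_group f G)"
proof -
  have "weak_group_morphism f {\<one>} G"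
    by (rule weak_group_morphismsI[OF one_is_normal])
      (use assms in \<open>auto simp: inj_on_eq_iff inv_solve_right'\<close>)
  then show "group (image_group f G)" and "f \<in> hom G (image_group f G)"
    by (rule image_group_is_group, rule weak_group_morphism_is_hom)
qed

lemma gamma_presentation_generators_distinct:
  fixes G :: "'a monoid"
  assumes "infinite (UNIV :: 'a set)" and "is_gamma_presentation G x y z"
  shows "x \<noteq> y" "x \<noteq> z" "y \<noteq> z"
proof -
  define K where "K = integer_mod_group 2 \<times>\<times> integer_mod_group 2"
  have K: "group K"
    by (simp add: K_def DirProd_group)
  have K_exponent_two: "u \<otimes>\<^bsub>K\<^esub> u = \<one>\<^bsub>K\<^esub>" for u
    by (cases u) (simp add: K_def)
  define a b c :: "int \<times> int" where "a = (0, 0)" "b = (1, 0)" "c = (0, 1)"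
  have abc: "a \<in> carrier K" "b \<in> carrier K" "c \<in> carrier K"
    by (simp_all add: a_b_c_def K_def carrier_integer_mod_group)
  \<comment> \<open>The universal property only speaks about groups on \<open>'a\<close>, so K is copied into \<open>'a\<close>.\<close>
  obtain e :: "nat \<Rightarrow> 'a" where "inj e"
    using infinite_countable_subset[OF assms(1)] by blast
  define f :: "int \<times> int \<Rightarrow> 'a" where "f = e \<circ> to_nat"
  have "inj f"
    unfolding f_def using \<open>inj e\<close> by (simp add: inj_compose)
  define H where "H = image_group f K"
  have H: "group H" and f: "f \<in> hom K H"
    using group.inj_on_image_group[OF K, of f] \<open>inj f\<close> by (simp_all add: H_def inj_on_subset)
  have "gamma_rels H (f a) (f b) (f c)"
    by (rule gamma_rels_hom[OF K H f abc group.gamma_rels_of_exponent_two[OF K K_exponent_two abc]])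
  moreover have "f a \<in> carrier H" "f b \<in> carrier H" "f c \<in> carrier H"
    using abc by (simp_all add: H_def image_group_carrier)
  ultimately obtain \<phi> where "\<phi> x = f a" "\<phi> y = f b" "\<phi> z = f c"
    using assms(2) H unfolding is_gamma_presentation_def by meson
  moreover have "f a \<noteq> f b" "f a \<noteq> f c" "f b \<noteq> f c"
    using \<open>inj f\<close> by (simp_all add: inj_eq a_b_c_def)
  ultimately show "x \<noteq> y" "x \<noteq> z" "y \<noteq> z"
    by auto
qed

theorem mainTheorem6:
  fixes G :: "'a monoid" and x y z :: 'a
  assumes "infinite (UNIV :: 'a set)"
    and "is_gamma_presentation G x y z"
  shows "\<not> (\<exists>Wc. homogeneous_scalar_qw G {x, y, z} Wc)"
proof
  assume "\<exists>Wc. homogeneous_scalar_qw G {x, y, z} Wc"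
  then obtain W where W: "homogeneous_scalar_qw G {x, y, z} W" ..
  then have nonzero: "W x \<noteq> 0" "W y \<noteq> 0" "W z \<noteq> 0"
    and unitary: "unitary_on_l2 G (walk_op G {x, y, z} W)"
    by (simp_all add: homogeneous_scalar_qw_def)
  have G: "group G" and gens: "x \<in> carrier G" "y \<in> carrier G" "z \<in> carrier G"
    and rels: "gamma_rels G x y z"
    using assms(2) unfolding is_gamma_presentation_def by blast+
  note distinct = gamma_presentation_generators_distinct[OF assms]
  have "orthogonal (W x) (W y)"
    using group.unitary_walk_orthogonal_coeffs[OF G refl gens distinct _ unitary] rels
    unfolding gamma_rels_def by (elim conjE)
  moreover have "orthogonal (W x) (W z)"
    using group.unitary_walk_orthogonal_coeffs[OF G _ gens(1,3,2) distinct(2,1) distinct(3)[symmetric]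
        _ unitary] rels
    unfolding gamma_rels_def by (simp add: insert_commute)
  moreover have "orthogonal (W y) (W z)"
    using group.unitary_walk_orthogonal_coeffs[OF G _ gens(2,3,1) distinct(3)
        distinct(1,2)[symmetric] _ unitary] rels
    unfolding gamma_rels_def by (simp add: insert_commute)
  ultimately show False
    using no_three_pairwise_orthogonal_nonzero[where 'a = complex] nonzero by simp
qed

end
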